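(* Let $f:(k+1)^V\to\mathbb{R}$ be monotone $k$-submodular with all marginal values $\Delta_{e,j}f(S)\in[0,1]$, let $F$ be its multilinear extension, and write $F_{i,j}=\partial F/\partial x_{i,j}$. Let $x\in\mathcal P$, let $(i_1,j_1),(i_2,j_2)\in[n]\times[k]$ be two distinct coordinates, let $\beta,\gamma\ge0$ with $0<\beta+\gamma\le1$, and suppose $x+\beta(e_{i_1,j_1}-e_{i_2,j_2})\in\mathcal P$ and $x-\gamma(e_{i_1,j_1}-e_{i_2,j_2})\in\mathcal P$. Let $x'$ be the random point equal to $x+\beta(e_{i_1,j_1}-e_{i_2,j_2})$ with probability $\frac{\gamma}{\beta+\gamma}$ and to $x-\gamma(e_{i_1,j_1}-e_{i_2,j_2})$ with probability $\frac{\beta}{\beta+\gamma}$. Then for every $\lambda\in[0,1]$, $$\mathbb{E}\big[e^{\lambda(F(x)-F(x'))}\big]\le e^{\lambda^2\beta\gamma\,(F_{i_2,j_2}(x)-F_{i_1,j_1}(x))^2}.$$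
   Context: Let $V=[n]=\{1,\dots,n\}$ and let $k\ge 1$ be an integer. Write $(k+1)^V$ for the set of $k$-tuples $S=(S_1,\dots,S_k)$ of pairwise disjoint subsets of $V$. For $S,T\in(k+1)^V$ let $S\sqcap T=(S_1\cap T_1,\dots,S_k\cap T_k)$ and let $S\sqcup T$ be the tuple whose $j$-th component is $(S_j\cup T_j)\setminus\bigcup_{l\neq j}(S_l\cup T_l)$. A function $f:(k+1)^V\to\mathbb{R}$ is $k$-submodular if $f(S)+f(T)\ge f(S\sqcap T)+f(S\sqcup T)$ for all $S,T\in(k+1)^V$. Write $S\preceq T$ if $S_j\subseteq T_j$ for all $j$; $f$ is monotone if $S\preceq T$ implies $f(S)\le f(T)$. For $e\notin\bigcup_l S_l$ and $j\in[k]$, $\Delta_{e,j}f(S)=f(S_1,\dots,S_{j-1},S_j\cup\{e\},S_{j+1},\dots,S_k)-f(S)$. Let $\mathcal P=\{x\in[0,1]^{n\times k}:\sum_{j=1}^k x_{i,j}\le 1\ \forall i\in[n]\}$. The multilinear extension of $f$ is the polynomial $F(x)=\sum_{S\in(k+1)^V} f(S_1,\dots,S_k)\Big(\prod_{j\in[k]}\prod_{i\in S_j}x_{i,j}\Big)\prod_{i\in V\setminus\bigcup_j S_j}\Big(1-\sum_{j=1}^k x_{i,j}\Big)$, considered on $\mathcal P$. $e_{i,j}$ denotes the standard basis vector of $\mathbb{R}^{n\times k}$ at coordinate $(i,j)$. *)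

theory Defs
  imports "HOL-Analysis.Analysis"
begin

text \<open>A k-tuple S = (S_1,...,S_k) of pairwise disjoint subsets of V = {1..n} is represented
  as a function S :: nat \<Rightarrow> nat set, with S j the j-th component for j in {1..k}
  and S j = {} for j outside {1..k}.\<close>

definition ktuples :: "nat \<Rightarrow> nat \<Rightarrow> (nat \<Rightarrow> nat set) set" where
  "ktuples n k = {S. (\<forall>j\<in>{1..k}. S j \<subseteq> {1..n}) \<and> (\<forall>j. j \<notin> {1..k} \<longrightarrow> S j = {})
                   \<and> (\<forall>j\<in>{1..k}. \<forall>l\<in>{1..k}. j \<noteq> l \<longrightarrow> S j \<inter> S l = {})}"

definition tmeet :: "nat \<Rightarrow> (nat \<Rightarrow> nat set) \<Rightarrow> (nat \<Rightarrow> nat set) \<Rightarrow> (nat \<Rightarrow> nat set)" where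
  "tmeet k S T = (\<lambda>j. if j \<in> {1..k} then S j \<inter> T j else {})"

definition tjoin :: "nat \<Rightarrow> (nat \<Rightarrow> nat set) \<Rightarrow> (nat \<Rightarrow> nat set) \<Rightarrow> (nat \<Rightarrow> nat set)" where
  "tjoin k S T = (\<lambda>j. if j \<in> {1..k}
      then (S j \<union> T j) - (\<Union>l\<in>{1..k} - {j}. S l \<union> T l) else {})"

definition tle :: "nat \<Rightarrow> (nat \<Rightarrow> nat set) \<Rightarrow> (nat \<Rightarrow> nat set) \<Rightarrow> bool" where
  "tle k S T \<longleftrightarrow> (\<forall>j\<in>{1..k}. S j \<subseteq> T j)"

definition k_submodular :: "nat \<Rightarrow> nat \<Rightarrow> ((nat \<Rightarrow> nat set) \<Rightarrow> real) \<Rightarrow> bool" where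
  "k_submodular n k f \<longleftrightarrow> (\<forall>S\<in>ktuples n k. \<forall>T\<in>ktuples n k.
      f S + f T \<ge> f (tmeet k S T) + f (tjoin k S T))"

definition k_monotone :: "nat \<Rightarrow> nat \<Rightarrow> ((nat \<Rightarrow> nat set) \<Rightarrow> real) \<Rightarrow> bool" where
  "k_monotone n k f \<longleftrightarrow> (\<forall>S\<in>ktuples n k. \<forall>T\<in>ktuples n k. tle k S T \<longrightarrow> f S \<le> f T)"

text \<open>Marginal value Delta_{e,j} f(S) (meaningful for e not in the support of S, j in {1..k}).\<close>
definition marginal :: "((nat \<Rightarrow> nat set) \<Rightarrow> real) \<Rightarrow> nat \<Rightarrow> nat \<Rightarrow> (nat \<Rightarrow> nat set) \<Rightarrow> real" where
  "marginal f e j S = f (S(j := insert e (S j))) - f S"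

definition support :: "nat \<Rightarrow> (nat \<Rightarrow> nat set) \<Rightarrow> nat set" where
  "support k S = (\<Union>l\<in>{1..k}. S l)"

text \<open>Points of R^{n x k} as functions x i j; only coordinates i in {1..n}, j in {1..k} matter.\<close>
definition polytopeP :: "nat \<Rightarrow> nat \<Rightarrow> (nat \<Rightarrow> nat \<Rightarrow> real) \<Rightarrow> bool" where
  "polytopeP n k x \<longleftrightarrow> (\<forall>i\<in>{1..n}. (\<forall>j\<in>{1..k}. 0 \<le> x i j \<and> x i j \<le> 1)
                          \<and> (\<Sum>j\<in>{1..k}. x i j) \<le> 1)"

definition multilinear_ext :: "nat \<Rightarrow> nat \<Rightarrow> ((nat \<Rightarrow> nat set) \<Rightarrow> real) \<Rightarrow> (nat \<Rightarrow> nat \<Rightarrow> real) \<Rightarrow> real" where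
  "multilinear_ext n k f x = (\<Sum>S\<in>ktuples n k.
      f S * (\<Prod>j\<in>{1..k}. \<Prod>i\<in>S j. x i j)
          * (\<Prod>i\<in>{1..n} - support k S. 1 - (\<Sum>j\<in>{1..k}. x i j)))"

definition ebasis :: "nat \<Rightarrow> nat \<Rightarrow> (nat \<Rightarrow> nat \<Rightarrow> real)" where
  "ebasis i j = (\<lambda>a b. if a = i \<and> b = j then 1 else 0)"

definition partial :: "((nat \<Rightarrow> nat \<Rightarrow> real) \<Rightarrow> real) \<Rightarrow> nat \<Rightarrow> nat \<Rightarrow> (nat \<Rightarrow> nat \<Rightarrow> real) \<Rightarrow> real" where
  "partial G i j x = deriv (\<lambda>t. G (\<lambda>a b. x a b + t * ebasis i j a b)) 0"

end

theory Submission imports Defs begin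

text \<open>Label every element i of V by \<sigma> i \<in> {0..k}, label 0 meaning that i lies in no component.
  For x \<in> P let the labels be independent, i taking label j \<ge> 1 with probability x i j and
  label 0 with the remaining probability; then F x is the expected value of f on the random
  labelling. Conditioning on the labels of at most two elements shows that F is affine in each
  coordinate, that the partial derivatives are averages of marginal values (hence lie in [0,1]),
  and that along e_{i1,j1} - e_{i2,j2} it is a quadratic F x + t (F_{i1,j1} - F_{i2,j2}) + C t^2
  whose leading coefficient C is nonnegative by k-submodularity (and zero if i1 = i2). For such a
  quadratic the two-point exponential moment is bounded using exp y \<le> 1 + y + y^2 on [-1,1].\<close>

section \<open>The multilinear extension as an expectation over random labellings\<close>

definition label_tuple :: "nat \<Rightarrow> nat \<Rightarrow> (nat \<Rightarrow> nat) \<Rightarrow> (nat \<Rightarrow> nat set)" where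
  "label_tuple n k \<sigma> = (\<lambda>j. if j \<in> {1..k} then {i\<in>{1..n}. \<sigma> i = j} else {})"

definition label_prob :: "nat \<Rightarrow> (nat \<Rightarrow> nat \<Rightarrow> real) \<Rightarrow> nat \<Rightarrow> nat \<Rightarrow> real" where
  "label_prob k x i l = (if l = 0 then 1 - (\<Sum>j\<in>{1..k}. x i j) else x i l)"

lemma label_tuple_outside: "j \<notin> {1..k} \<Longrightarrow> label_tuple n k \<sigma> j = {}"
  unfolding label_tuple_def by (simp only: if_False)

lemma label_tuple_in_ktuples: "label_tuple n k \<sigma> \<in> ktuples n k"
  unfolding label_tuple_def ktuples_def by auto

lemma support_label_tuple: "support k (label_tuple n k \<sigma>) = {i\<in>{1..n}. \<sigma> i \<in> {1..k}}"
  unfolding support_def label_tuple_def by auto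

lemma inj_on_label_tuple: "inj_on (label_tuple n k) ({1..n} \<rightarrow>\<^sub>E {0..k})"
proof (rule inj_onI)
  fix \<sigma> \<tau> assume \<sigma>: "\<sigma> \<in> {1..n} \<rightarrow>\<^sub>E {0..k}" and \<tau>: "\<tau> \<in> {1..n} \<rightarrow>\<^sub>E {0..k}"
    and eq: "label_tuple n k \<sigma> = label_tuple n k \<tau>"
  have "\<sigma> i = \<tau> i" if i: "i \<in> {1..n}" for i
  proof -
    have "\<sigma> i = j \<longleftrightarrow> \<tau> i = j" if "j \<in> {1..k}" for j
      using fun_cong[OF eq, of j] i that by (auto simp: label_tuple_def)
    moreover have "\<sigma> i \<in> {0..k}" "\<tau> i \<in> {0..k}" using \<sigma> \<tau> i by auto
    ultimately have "\<sigma> i \<in> {1..k} \<or> \<tau> i \<in> {1..k} \<or> \<sigma> i = \<tau> i" by auto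
    with \<open>\<And>j. j \<in> {1..k} \<Longrightarrow> \<sigma> i = j \<longleftrightarrow> \<tau> i = j\<close> show ?thesis by metis
  qed
  then show "\<sigma> = \<tau>" using \<sigma> \<tau> by (metis PiE_ext)
qed

lemma ktuple_has_labelling:
  assumes S: "S \<in> ktuples n k"
  obtains \<sigma> where "\<sigma> \<in> {1..n} \<rightarrow>\<^sub>E {0..k}" "label_tuple n k \<sigma> = S"
proof -
  have "\<exists>l\<in>{0..k}. \<forall>j\<in>{1..k}. i \<in> S j \<longleftrightarrow> l = j" for i
  proof (cases "\<exists>j\<in>{1..k}. i \<in> S j")
    case True
    then obtain j where "j \<in> {1..k}" "i \<in> S j" by blast
    with S show ?thesis unfolding ktuples_def by (intro bexI[of _ j]) (auto simp: disjoint_iff)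
  next
    case False
    then show ?thesis by (intro bexI[of _ 0]) auto
  qed
  then obtain g where g: "\<And>i. g i \<in> {0..k}" "\<And>i j. j \<in> {1..k} \<Longrightarrow> i \<in> S j \<longleftrightarrow> g i = j"
    by metis
  have "label_tuple n k (restrict g {1..n}) = S"
  proof
    fix j show "label_tuple n k (restrict g {1..n}) j = S j"
    proof (cases "j \<in> {1..k}")
      case True
      then have "S j \<subseteq> {1..n}" using S unfolding ktuples_def by blast
      with True g(2)[OF True] show ?thesis unfolding label_tuple_def by auto
    next
      case False
      then show ?thesis using S unfolding ktuples_def by (simp add: label_tuple_outside)
    qed
  qed
  moreover have "restrict g {1..n} \<in> {1..n} \<rightarrow>\<^sub>E {0..k}" using g(1) by simp
  ultimately show ?thesis using that by blast
qed

lemma label_tuple_image: "label_tuple n k ` ({1..n} \<rightarrow>\<^sub>E {0..k}) = ktuples n k"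
proof
  show "ktuples n k \<subseteq> label_tuple n k ` ({1..n} \<rightarrow>\<^sub>E {0..k})"
  proof
    fix S assume "S \<in> ktuples n k"
    then obtain \<sigma> where "\<sigma> \<in> {1..n} \<rightarrow>\<^sub>E {0..k}" "label_tuple n k \<sigma> = S"
      by (rule ktuple_has_labelling)
    then show "S \<in> label_tuple n k ` ({1..n} \<rightarrow>\<^sub>E {0..k})" by blast
  qed
qed (use label_tuple_in_ktuples in blast)

lemma label_tuple_weight:
  assumes "\<sigma> \<in> {1..n} \<rightarrow>\<^sub>E {0..k}"
  shows "(\<Prod>j\<in>{1..k}. \<Prod>i\<in>label_tuple n k \<sigma> j. x i j)
           * (\<Prod>i\<in>{1..n} - support k (label_tuple n k \<sigma>). 1 - (\<Sum>j\<in>{1..k}. x i j))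
         = (\<Prod>i\<in>{1..n}. label_prob k x i (\<sigma> i))"
proof -
  define A where "A = {i\<in>{1..n}. \<sigma> i \<noteq> 0}"
  have support: "support k (label_tuple n k \<sigma>) = A"
    using assms unfolding support_label_tuple A_def by auto
  have "(\<Prod>i\<in>{1..n}. label_prob k x i (\<sigma> i))
      = (\<Prod>i\<in>{1..n} \<inter> A. label_prob k x i (\<sigma> i)) * (\<Prod>i\<in>{1..n} - A. label_prob k x i (\<sigma> i))"
    by (rule prod.Int_Diff) simp
  also have "(\<Prod>i\<in>{1..n} - A. label_prob k x i (\<sigma> i)) = (\<Prod>i\<in>{1..n} - A. 1 - (\<Sum>j\<in>{1..k}. x i j))"
    by (rule prod.cong) (auto simp: A_def label_prob_def)
  also have "(\<Prod>i\<in>{1..n} \<inter> A. label_prob k x i (\<sigma> i)) = (\<Prod>i\<in>A. x i (\<sigma> i))"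
    by (rule prod.cong) (auto simp: A_def label_prob_def)
  also have "\<dots> = (\<Prod>j\<in>{1..k}. \<Prod>i\<in>{i. i \<in> A \<and> \<sigma> i = j}. x i (\<sigma> i))"
    by (rule prod.group[symmetric]) (use assms in \<open>auto simp: A_def\<close>)
  also have "\<dots> = (\<Prod>j\<in>{1..k}. \<Prod>i\<in>label_tuple n k \<sigma> j. x i j)"
    by (rule prod.cong[OF refl], rule prod.cong) (auto simp: A_def label_tuple_def)
  finally show ?thesis using support by simp
qed

definition label_expect :: "nat \<Rightarrow> nat \<Rightarrow> ((nat \<Rightarrow> nat set) \<Rightarrow> real) \<Rightarrow> (nat \<Rightarrow> nat \<Rightarrow> real) \<Rightarrow> real" where
  "label_expect n k f p = (\<Sum>\<sigma>\<in>{1..n} \<rightarrow>\<^sub>E {0..k}. f (label_tuple n k \<sigma>) * (\<Prod>i\<in>{1..n}. p i (\<sigma> i)))"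

lemma multilinear_ext_eq_label_expect: "multilinear_ext n k f x = label_expect n k f (label_prob k x)"
proof -
  have "multilinear_ext n k f x = (\<Sum>\<sigma>\<in>{1..n} \<rightarrow>\<^sub>E {0..k}. f (label_tuple n k \<sigma>) *
      ((\<Prod>j\<in>{1..k}. \<Prod>i\<in>label_tuple n k \<sigma> j. x i j)
        * (\<Prod>i\<in>{1..n} - support k (label_tuple n k \<sigma>). 1 - (\<Sum>j\<in>{1..k}. x i j))))"
    unfolding multilinear_ext_def label_tuple_image[symmetric]
    by (subst sum.reindex[OF inj_on_label_tuple]) (simp add: mult.assoc)
  also have "\<dots> = label_expect n k f (label_prob k x)"
    unfolding label_expect_def by (rule sum.cong[OF refl]) (simp only: label_tuple_weight)
  finally show ?thesis .
qed

section \<open>Conditioning on the labels of one or two elements\<close>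

lemma sum_PiE_remove:
  assumes "finite A" "i0 \<in> A"
  shows "(\<Sum>\<sigma>\<in>A \<rightarrow>\<^sub>E B. G \<sigma>) = (\<Sum>a\<in>B. \<Sum>\<sigma>\<in>(A - {i0}) \<rightarrow>\<^sub>E B. G (\<sigma>(i0:=a)))"
proof -
  have A: "A = insert i0 (A - {i0})" using assms by auto
  have "(\<Sum>\<sigma>\<in>A \<rightarrow>\<^sub>E B. G \<sigma>) = (\<Sum>z\<in>B \<times> ((A - {i0}) \<rightarrow>\<^sub>E B). G ((\<lambda>(y, g). g(i0 := y)) z))"
    by (subst A, subst PiE_insert_eq, subst sum.reindex[OF inj_combinator]) (simp_all add: comp_def)
  also have "\<dots> = (\<Sum>a\<in>B. \<Sum>\<sigma>\<in>(A - {i0}) \<rightarrow>\<^sub>E B. G (\<sigma>(i0:=a)))"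
    by (simp add: sum.cartesian_product case_prod_beta)
  finally show ?thesis .
qed

lemma prod_remove_fun_upd:
  assumes "finite A" "i0 \<in> A"
  shows "(\<Prod>i\<in>A. p i ((\<sigma>(i0:=a)) i)) = p i0 a * (\<Prod>i\<in>A - {i0}. p i (\<sigma> i))"
proof -
  have "(\<Prod>i\<in>A. p i ((\<sigma>(i0:=a)) i)) = p i0 a * (\<Prod>i\<in>A - {i0}. p i ((\<sigma>(i0:=a)) i))"
    using assms by (simp add: prod.remove)
  also have "(\<Prod>i\<in>A - {i0}. p i ((\<sigma>(i0:=a)) i)) = (\<Prod>i\<in>A - {i0}. p i (\<sigma> i))"
    by (rule prod.cong) auto
  finally show ?thesis .
qed

definition cond_expect1 :: "nat \<Rightarrow> nat \<Rightarrow> ((nat \<Rightarrow> nat set) \<Rightarrow> real) \<Rightarrow> (nat \<Rightarrow> nat \<Rightarrow> real) \<Rightarrow> nat \<Rightarrow> nat \<Rightarrow> real" where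
  "cond_expect1 n k f p i1 a = (\<Sum>\<sigma>\<in>({1..n} - {i1}) \<rightarrow>\<^sub>E {0..k}.
       (\<Prod>i\<in>{1..n} - {i1}. p i (\<sigma> i)) * f (label_tuple n k (\<sigma>(i1:=a))))"

definition cond_expect2 :: "nat \<Rightarrow> nat \<Rightarrow> ((nat \<Rightarrow> nat set) \<Rightarrow> real) \<Rightarrow> (nat \<Rightarrow> nat \<Rightarrow> real) \<Rightarrow> nat \<Rightarrow> nat \<Rightarrow> nat \<Rightarrow> nat \<Rightarrow> real" where
  "cond_expect2 n k f p i1 i2 a b = (\<Sum>\<sigma>\<in>({1..n} - {i1} - {i2}) \<rightarrow>\<^sub>E {0..k}.
       (\<Prod>i\<in>{1..n} - {i1} - {i2}. p i (\<sigma> i)) * f (label_tuple n k (\<sigma>(i2:=b, i1:=a))))"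

lemma label_expect_eq_sum_cond_expect1:
  assumes "i1 \<in> {1..n}"
  shows "label_expect n k f p = (\<Sum>a\<in>{0..k}. p i1 a * cond_expect1 n k f p i1 a)"
  unfolding label_expect_def cond_expect1_def sum_distrib_left
  by (subst sum_PiE_remove[OF _ assms], simp, intro sum.cong refl, subst prod_remove_fun_upd[OF _ assms])
     (auto simp: mult.left_commute mult.commute)

lemma label_expect_eq_sum_cond_expect2:
  assumes "i1 \<in> {1..n}" "i2 \<in> {1..n}" "i1 \<noteq> i2"
  shows "label_expect n k f p = (\<Sum>a\<in>{0..k}. \<Sum>b\<in>{0..k}. p i1 a * p i2 b * cond_expect2 n k f p i1 i2 a b)"
proof -
  have i2: "i2 \<in> {1..n} - {i1}" using assms by auto
  have "cond_expect1 n k f p i1 a = (\<Sum>b\<in>{0..k}. p i2 b * cond_expect2 n k f p i1 i2 a b)" for a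
    unfolding cond_expect1_def cond_expect2_def sum_distrib_left
    by (subst sum_PiE_remove[OF _ i2], simp, intro sum.cong refl, subst prod_remove_fun_upd[OF _ i2])
       (auto simp: mult.left_commute mult.commute)
  then show ?thesis unfolding label_expect_eq_sum_cond_expect1[OF assms(1)]
    by (simp add: sum_distrib_left mult.assoc)
qed

definition unit_diff :: "nat \<Rightarrow> nat \<Rightarrow> nat \<Rightarrow> real" where
  "unit_diff a0 a1 a = (if a = a0 then 1 else 0) - (if a = a1 then 1 else 0)"

lemma sum_unit_diff_shift:
  assumes "finite B" "a0 \<in> B" "a1 \<in> B"
  shows "(\<Sum>a\<in>B. (p a + t * unit_diff a0 a1 a) * H a) = (\<Sum>a\<in>B. p a * H a) + t * (H a0 - H a1)"
proof -
  have "(\<Sum>a\<in>B. unit_diff a0 a1 a * H a)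
      = (\<Sum>a\<in>B. if a = a0 then H a else 0) - (\<Sum>a\<in>B. if a = a1 then H a else 0)"
    unfolding sum_subtractf[symmetric] by (intro sum.cong refl) (simp add: unit_diff_def)
  also have "\<dots> = H a0 - H a1" using assms by (simp add: sum.delta')
  moreover have "(\<Sum>a\<in>B. (p a + t * unit_diff a0 a1 a) * H a)
      = (\<Sum>a\<in>B. p a * H a) + t * (\<Sum>a\<in>B. unit_diff a0 a1 a * H a)"
    by (simp add: distrib_right sum.distrib sum_distrib_left mult.assoc)
  ultimately show ?thesis by simp
qed

lemma double_sum_unit_diff_shift:
  assumes "finite B" "a0 \<in> B" "a1 \<in> B" "b0 \<in> B" "b1 \<in> B"
  shows "(\<Sum>a\<in>B. \<Sum>b\<in>B. (p a + t * unit_diff a0 a1 a) * (q b + s * unit_diff b0 b1 b) * H a b)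
    = (\<Sum>a\<in>B. \<Sum>b\<in>B. p a * q b * H a b) + t * (\<Sum>b\<in>B. q b * (H a0 b - H a1 b))
      + s * (\<Sum>a\<in>B. p a * (H a b0 - H a b1)) + t * s * (H a0 b0 - H a1 b0 - H a0 b1 + H a1 b1)"
proof -
  define K where "K a = (\<Sum>b\<in>B. q b * H a b) + s * (H a b0 - H a b1)" for a
  have "(\<Sum>b\<in>B. (p a + t * unit_diff a0 a1 a) * (q b + s * unit_diff b0 b1 b) * H a b)
      = (p a + t * unit_diff a0 a1 a) * K a" for a
    unfolding K_def sum_unit_diff_shift[OF assms(1,4,5), symmetric]
    by (simp add: sum_distrib_left mult.assoc)
  then have "(\<Sum>a\<in>B. \<Sum>b\<in>B. (p a + t * unit_diff a0 a1 a) * (q b + s * unit_diff b0 b1 b) * H a b)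
      = (\<Sum>a\<in>B. p a * K a) + t * (K a0 - K a1)"
    using sum_unit_diff_shift[OF assms(1-3)] by simp
  also have "(\<Sum>a\<in>B. p a * K a)
      = (\<Sum>a\<in>B. \<Sum>b\<in>B. p a * q b * H a b) + s * (\<Sum>a\<in>B. p a * (H a b0 - H a b1))"
    unfolding K_def by (simp add: distrib_left sum.distrib sum_distrib_left mult.assoc mult.left_commute)
  also have "K a0 - K a1
      = (\<Sum>b\<in>B. q b * (H a0 b - H a1 b)) + s * (H a0 b0 - H a1 b0 - H a0 b1 + H a1 b1)"
    unfolding K_def by (simp add: algebra_simps sum_subtractf)
  finally show ?thesis by (simp add: algebra_simps)
qed

lemma label_expect_shift_one_row:
  assumes "i1 \<in> {1..n}" "a0 \<in> {0..k}" "a1 \<in> {0..k}"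
    and "\<And>l. p' i1 l = p i1 l + t * unit_diff a0 a1 l"
    and "\<And>i l. i \<in> {1..n} - {i1} \<Longrightarrow> p' i l = p i l"
  shows "label_expect n k f p'
       = label_expect n k f p + t * (cond_expect1 n k f p i1 a0 - cond_expect1 n k f p i1 a1)"
proof -
  have "cond_expect1 n k f p' i1 a = cond_expect1 n k f p i1 a" for a
    unfolding cond_expect1_def by (intro sum.cong refl arg_cong2[where f="(*)"] prod.cong) (use assms in auto)
  then have "label_expect n k f p'
      = (\<Sum>a\<in>{0..k}. (p i1 a + t * unit_diff a0 a1 a) * cond_expect1 n k f p i1 a)"
    by (simp add: label_expect_eq_sum_cond_expect1[OF assms(1)] assms(4))
  then show ?thesis
    unfolding label_expect_eq_sum_cond_expect1[OF assms(1), of k f p]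
    using sum_unit_diff_shift[of "{0..k}" a0 a1] assms(2,3) by simp
qed

lemma label_expect_shift_two_rows:
  fixes f :: "(nat \<Rightarrow> nat set) \<Rightarrow> real"
  assumes "i1 \<in> {1..n}" "i2 \<in> {1..n}" "i1 \<noteq> i2"
    "a0 \<in> {0..k}" "a1 \<in> {0..k}" "b0 \<in> {0..k}" "b1 \<in> {0..k}"
    and "\<And>l. p' i1 l = p i1 l + t * unit_diff a0 a1 l"
    and "\<And>l. p' i2 l = p i2 l + s * unit_diff b0 b1 l"
    and "\<And>i l. i \<in> {1..n} - {i1} - {i2} \<Longrightarrow> p' i l = p i l"
  defines "\<Psi> \<equiv> cond_expect2 n k f p i1 i2"
  shows "label_expect n k f p' = label_expect n k f p
      + t * (\<Sum>b\<in>{0..k}. p i2 b * (\<Psi> a0 b - \<Psi> a1 b))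
      + s * (\<Sum>a\<in>{0..k}. p i1 a * (\<Psi> a b0 - \<Psi> a b1))
      + t * s * (\<Psi> a0 b0 - \<Psi> a1 b0 - \<Psi> a0 b1 + \<Psi> a1 b1)"
proof -
  have "cond_expect2 n k f p' i1 i2 a b = \<Psi> a b" for a b
    unfolding cond_expect2_def \<Psi>_def
    by (intro sum.cong refl arg_cong2[where f="(*)"] prod.cong) (use assms in auto)
  then have "label_expect n k f p' = (\<Sum>a\<in>{0..k}. \<Sum>b\<in>{0..k}.
      (p i1 a + t * unit_diff a0 a1 a) * (p i2 b + s * unit_diff b0 b1 b) * \<Psi> a b)"
    by (simp add: label_expect_eq_sum_cond_expect2[OF assms(1-3)] assms(8,9))
  then show ?thesis
    unfolding label_expect_eq_sum_cond_expect2[OF assms(1-3), of k f p] \<Psi>_def[symmetric]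
    using double_sum_unit_diff_shift[of "{0..k}" a0 a1 b0 b1] assms(4-7) by simp
qed

lemma label_prob_add_two_ebasis:
  assumes "j1 \<in> {1..k}" "j2 \<in> {1..k}"
  shows "label_prob k (\<lambda>a b. x a b + t * ebasis i1 j1 a b + s * ebasis i2 j2 a b) i l
       = label_prob k x i l + (if i = i1 then t * unit_diff j1 0 l else 0)
           + (if i = i2 then s * unit_diff j2 0 l else 0)"
proof (cases "l = 0")
  case True
  have "(\<Sum>j\<in>{1..k}. ebasis i' j' i j) = (if i = i' then 1 else 0)" if "j' \<in> {1..k}" for i' j'
    using that by (simp add: ebasis_def)
  with True assms show ?thesis
    by (simp add: label_prob_def unit_diff_def sum.distrib sum_distrib_left[symmetric])
next
  case False
  with assms show ?thesis by (auto simp: label_prob_def unit_diff_def ebasis_def)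
qed

lemma label_prob_nonneg:
  assumes "polytopeP n k x" "i \<in> {1..n}" "l \<in> {0..k}"
  shows "0 \<le> label_prob k x i l"
  using assms unfolding polytopeP_def label_prob_def by auto

lemma sum_label_prob: "(\<Sum>l\<in>{0..k}. label_prob k x i l) = 1"
proof -
  have "(\<Sum>l\<in>{1..k}. label_prob k x i l) = (\<Sum>l\<in>{1..k}. x i l)"
    by (rule sum.cong) (auto simp: label_prob_def)
  moreover have "{0..k} = insert 0 {1..k}" by auto
  ultimately show ?thesis by (simp add: label_prob_def)
qed

lemma sum_prod_label_prob:
  assumes "finite A"
  shows "(\<Sum>\<sigma>\<in>A \<rightarrow>\<^sub>E {0..k}. \<Prod>i\<in>A. label_prob k x i (\<sigma> i)) = 1"
  using prod_sum_PiE[OF assms, of "\<lambda>i. {0..k}" "label_prob k x"] by (simp add: sum_label_prob)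

lemma weighted_sum_in_unit_interval:
  fixes w d :: "'a \<Rightarrow> real"
  assumes "finite W" "\<And>\<sigma>. \<sigma> \<in> W \<Longrightarrow> 0 \<le> w \<sigma>" "sum w W = 1"
    "\<And>\<sigma>. \<sigma> \<in> W \<Longrightarrow> 0 \<le> d \<sigma> \<and> d \<sigma> \<le> 1"
  shows "0 \<le> (\<Sum>\<sigma>\<in>W. w \<sigma> * d \<sigma>) \<and> (\<Sum>\<sigma>\<in>W. w \<sigma> * d \<sigma>) \<le> 1"
proof
  show "0 \<le> (\<Sum>\<sigma>\<in>W. w \<sigma> * d \<sigma>)" using assms by (intro sum_nonneg) auto
  have "(\<Sum>\<sigma>\<in>W. w \<sigma> * d \<sigma>) \<le> (\<Sum>\<sigma>\<in>W. w \<sigma>)"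
    using assms by (intro sum_mono) (simp add: mult_left_le)
  then show "(\<Sum>\<sigma>\<in>W. w \<sigma> * d \<sigma>) \<le> 1" using assms by simp
qed

lemma label_tuple_fun_upd:
  assumes "\<tau> i0 = 0" "i0 \<in> {1..n}" "j \<in> {1..k}"
  shows "label_tuple n k (\<tau>(i0:=j)) = (label_tuple n k \<tau>)(j := insert i0 (label_tuple n k \<tau> j))"
proof
  fix j' show "label_tuple n k (\<tau>(i0:=j)) j' = ((label_tuple n k \<tau>)(j := insert i0 (label_tuple n k \<tau> j))) j'"
  proof (cases "j' \<in> {1..k}")
    case True
    with assms show ?thesis by (auto simp: label_tuple_def)
  next
    case False
    with assms(3) show ?thesis by (auto simp: label_tuple_outside)
  qed
qed

lemma label_tuple_gain_bounds:
  fixes \<tau> :: "nat \<Rightarrow> nat"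
  assumes M: "\<And>S e j. S \<in> ktuples n k \<Longrightarrow> e \<in> {1..n} \<Longrightarrow> e \<notin> support k S \<Longrightarrow> j \<in> {1..k} \<Longrightarrow>
           0 \<le> marginal f e j S \<and> marginal f e j S \<le> 1"
    and "\<tau> e = 0" "e \<in> {1..n}" "j \<in> {1..k}"
  shows "0 \<le> f (label_tuple n k (\<tau>(e:=j))) - f (label_tuple n k \<tau>)
       \<and> f (label_tuple n k (\<tau>(e:=j))) - f (label_tuple n k \<tau>) \<le> 1"
proof -
  have "f (label_tuple n k (\<tau>(e:=j))) - f (label_tuple n k \<tau>) = marginal f e j (label_tuple n k \<tau>)"
    unfolding marginal_def label_tuple_fun_upd[of \<tau> e n j k, OF assms(2-4)] ..
  moreover have "e \<notin> support k (label_tuple n k \<tau>)" using assms(2) by (simp add: support_label_tuple)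
  ultimately show ?thesis using M[OF label_tuple_in_ktuples assms(3) _ assms(4)] by simp
qed

lemma k_submodular_label_tuple:
  assumes "k_submodular n k f" "i1 \<noteq> i2" "i1 \<in> {1..n}" "i2 \<in> {1..n}"
    "j1 \<in> {1..k}" "j2 \<in> {1..k}" "\<tau> i1 = 0" "\<tau> i2 = 0"
  shows "f (label_tuple n k (\<tau>(i2:=j2, i1:=j1))) + f (label_tuple n k \<tau>)
       \<le> f (label_tuple n k (\<tau>(i1:=j1))) + f (label_tuple n k (\<tau>(i2:=j2)))"
proof -
  let ?S1 = "label_tuple n k (\<tau>(i1:=j1))" and ?S2 = "label_tuple n k (\<tau>(i2:=j2))"
  have "tmeet k ?S1 ?S2 = label_tuple n k \<tau>"
  proof
    fix j show "tmeet k ?S1 ?S2 j = label_tuple n k \<tau> j"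
      using assms by (cases "j \<in> {1..k}") (auto simp: tmeet_def label_tuple_def)
  qed
  moreover have "tjoin k ?S1 ?S2 = label_tuple n k (\<tau>(i2:=j2, i1:=j1))"
  proof
    fix j show "tjoin k ?S1 ?S2 j = label_tuple n k (\<tau>(i2:=j2, i1:=j1)) j"
    proof (cases "j \<in> {1..k}")
      case True
      have "i \<in> tjoin k ?S1 ?S2 j \<longleftrightarrow> i \<in> label_tuple n k (\<tau>(i2:=j2, i1:=j1)) j" for i
        using assms True by (cases "i = i1"; cases "i = i2") (auto simp: tjoin_def label_tuple_def)
      then show ?thesis by blast
    next
      case False
      then show ?thesis unfolding tjoin_def by (simp only: if_not_P if_False label_tuple_outside not_False_eq_True)
    qed
  qed
  moreover have "f (tmeet k ?S1 ?S2) + f (tjoin k ?S1 ?S2) \<le> f ?S1 + f ?S2"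
    using assms(1) label_tuple_in_ktuples unfolding k_submodular_def by blast
  ultimately show ?thesis by simp
qed

lemma cond_expect1_gain_bounds:
  assumes M: "\<And>S e j. S \<in> ktuples n k \<Longrightarrow> e \<in> {1..n} \<Longrightarrow> e \<notin> support k S \<Longrightarrow> j \<in> {1..k} \<Longrightarrow>
           0 \<le> marginal f e j S \<and> marginal f e j S \<le> 1"
    and P: "polytopeP n k x" and "i \<in> {1..n}" "j \<in> {1..k}"
  shows "0 \<le> cond_expect1 n k f (label_prob k x) i j - cond_expect1 n k f (label_prob k x) i 0
       \<and> cond_expect1 n k f (label_prob k x) i j - cond_expect1 n k f (label_prob k x) i 0 \<le> 1"
proof -
  let ?W = "({1..n} - {i}) \<rightarrow>\<^sub>E {0..k}" and ?w = "\<lambda>\<sigma>. \<Prod>i'\<in>{1..n} - {i}. label_prob k x i' (\<sigma> i')"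
  have "cond_expect1 n k f (label_prob k x) i j - cond_expect1 n k f (label_prob k x) i 0
     = (\<Sum>\<sigma>\<in>?W. ?w \<sigma> * (f (label_tuple n k (\<sigma>(i:=j))) - f (label_tuple n k (\<sigma>(i:=0)))))"
    unfolding cond_expect1_def by (simp add: sum_subtractf[symmetric] right_diff_distrib)
  also have "0 \<le> \<dots> \<and> \<dots> \<le> 1"
  proof (rule weighted_sum_in_unit_interval)
    show "0 \<le> ?w \<sigma>" if "\<sigma> \<in> ?W" for \<sigma>
      using that by (intro prod_nonneg label_prob_nonneg[OF P]) (auto simp: PiE_def Pi_def)
    show "0 \<le> f (label_tuple n k (\<sigma>(i:=j))) - f (label_tuple n k (\<sigma>(i:=0)))
        \<and> f (label_tuple n k (\<sigma>(i:=j))) - f (label_tuple n k (\<sigma>(i:=0))) \<le> 1" for \<sigma>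
      using label_tuple_gain_bounds[OF M, where \<tau>="\<sigma>(i:=0)" and e=i and j=j] assms by simp
  qed (simp_all add: finite_PiE sum_prod_label_prob)
  finally show ?thesis .
qed

lemma cond_expect2_cross_nonneg:
  assumes "k_submodular n k f" and P: "polytopeP n k x"
    and "i1 \<noteq> i2" "i1 \<in> {1..n}" "i2 \<in> {1..n}" "j1 \<in> {1..k}" "j2 \<in> {1..k}"
  defines "\<Psi> \<equiv> cond_expect2 n k f (label_prob k x) i1 i2"
  shows "0 \<le> \<Psi> j1 0 - \<Psi> 0 0 - \<Psi> j1 j2 + \<Psi> 0 j2"
proof -
  let ?W = "({1..n} - {i1} - {i2}) \<rightarrow>\<^sub>E {0..k}"
    and ?w = "\<lambda>\<sigma>. \<Prod>i\<in>{1..n} - {i1} - {i2}. label_prob k x i (\<sigma> i)"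
  let ?G = "\<lambda>a b \<sigma>. f (label_tuple n k (\<sigma>(i2:=b, i1:=a)))"
  have "\<Psi> j1 0 - \<Psi> 0 0 - \<Psi> j1 j2 + \<Psi> 0 j2
     = (\<Sum>\<sigma>\<in>?W. ?w \<sigma> * (?G j1 0 \<sigma> - ?G 0 0 \<sigma> - ?G j1 j2 \<sigma> + ?G 0 j2 \<sigma>))"
    unfolding \<Psi>_def cond_expect2_def
    by (simp add: sum_subtractf[symmetric] sum.distrib[symmetric] algebra_simps)
  also have "0 \<le> \<dots>"
  proof (rule sum_nonneg)
    fix \<sigma> assume "\<sigma> \<in> ?W"
    then have "0 \<le> ?w \<sigma>" by (intro prod_nonneg label_prob_nonneg[OF P]) (auto simp: PiE_def Pi_def)
    moreover have "0 \<le> ?G j1 0 \<sigma> - ?G 0 0 \<sigma> - ?G j1 j2 \<sigma> + ?G 0 j2 \<sigma>"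
    proof -
      define \<tau> where "\<tau> = \<sigma>(i2:=0, i1:=0)"
      have "\<tau> i1 = 0" "\<tau> i2 = 0" unfolding \<tau>_def by auto
      note submod = k_submodular_label_tuple[OF assms(1,3-7) this]
      have eqs: "\<tau>(i2:=j2, i1:=j1) = \<sigma>(i2:=j2, i1:=j1)" "\<tau>(i1:=j1) = \<sigma>(i2:=0, i1:=j1)"
        "\<tau>(i2:=j2) = \<sigma>(i2:=j2, i1:=0)"
        unfolding \<tau>_def using assms(3) by (auto simp: fun_eq_iff)
      show ?thesis using submod unfolding eqs \<tau>_def[symmetric] fun_upd_upd by linarith
    qed
    ultimately show "0 \<le> ?w \<sigma> * (?G j1 0 \<sigma> - ?G 0 0 \<sigma> - ?G j1 j2 \<sigma> + ?G 0 j2 \<sigma>)" by simp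
  qed
  finally show ?thesis .
qed

section \<open>Partial derivatives and the exchange direction\<close>

lemma deriv_affine:
  fixes g :: "real \<Rightarrow> real"
  assumes "\<And>s. g s = c + s * D"
  shows "deriv g y = D"
proof -
  have "g = (\<lambda>s. c + s * D)" using assms by auto
  moreover have "((\<lambda>s. c + s * D) has_real_derivative D) (at y)"
    by (auto intro!: derivative_eq_intros)
  ultimately show ?thesis by (simp add: DERIV_imp_deriv)
qed

lemma multilinear_ext_add_ebasis:
  assumes "i \<in> {1..n}" "j \<in> {1..k}"
  shows "multilinear_ext n k f (\<lambda>a b. x a b + s * ebasis i j a b) = multilinear_ext n k f x
           + s * (cond_expect1 n k f (label_prob k x) i j - cond_expect1 n k f (label_prob k x) i 0)"
proof -
  have "label_prob k (\<lambda>a b. x a b + s * ebasis i j a b) i' l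
      = label_prob k x i' l + (if i' = i then s * unit_diff j 0 l else 0)" for i' l
    using label_prob_add_two_ebasis[OF assms(2) assms(2), of x s i 0 i i' l] by simp
  then show ?thesis unfolding multilinear_ext_eq_label_expect
    by (intro label_expect_shift_one_row[OF assms(1)]) (use assms(2) in auto)
qed

lemma partial_multilinear_ext:
  assumes "i \<in> {1..n}" "j \<in> {1..k}"
  shows "partial (multilinear_ext n k f) i j x
       = cond_expect1 n k f (label_prob k x) i j - cond_expect1 n k f (label_prob k x) i 0"
  unfolding partial_def by (rule deriv_affine) (rule multilinear_ext_add_ebasis[OF assms])

lemma partial_multilinear_ext_bounds:
  assumes "\<And>S e j. S \<in> ktuples n k \<Longrightarrow> e \<in> {1..n} \<Longrightarrow> e \<notin> support k S \<Longrightarrow> j \<in> {1..k} \<Longrightarrow>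
           0 \<le> marginal f e j S \<and> marginal f e j S \<le> 1"
    and "polytopeP n k x" "i \<in> {1..n}" "j \<in> {1..k}"
  shows "0 \<le> partial (multilinear_ext n k f) i j x \<and> partial (multilinear_ext n k f) i j x \<le> 1"
  unfolding partial_multilinear_ext[OF assms(3,4)] by (rule cond_expect1_gain_bounds[OF assms])

lemma multilinear_ext_add_two_ebasis:
  assumes "k_submodular n k f" "polytopeP n k x"
    and i: "i1 \<in> {1..n}" "i2 \<in> {1..n}" "i1 \<noteq> i2" and j: "j1 \<in> {1..k}" "j2 \<in> {1..k}"
  defines "F \<equiv> multilinear_ext n k f"
  shows "\<exists>C\<ge>0. \<forall>t s. F (\<lambda>a b. x a b + t * ebasis i1 j1 a b + s * ebasis i2 j2 a b)
           = F x + t * partial F i1 j1 x + s * partial F i2 j2 x - t * s * C"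
proof -
  define p where "p = label_prob k x"
  define \<Psi> where "\<Psi> = cond_expect2 n k f p i1 i2"
  define A where "A = (\<Sum>b\<in>{0..k}. p i2 b * (\<Psi> j1 b - \<Psi> 0 b))"
  define B where "B = (\<Sum>a\<in>{0..k}. p i1 a * (\<Psi> a j2 - \<Psi> a 0))"
  define C where "C = \<Psi> j1 0 - \<Psi> 0 0 - \<Psi> j1 j2 + \<Psi> 0 j2"
  have bilinear: "F (\<lambda>a b. x a b + t * ebasis i1 j1 a b + s * ebasis i2 j2 a b)
      = F x + t * A + s * B - t * s * C" for t s
  proof -
    have "label_expect n k f (label_prob k (\<lambda>a b. x a b + t * ebasis i1 j1 a b + s * ebasis i2 j2 a b))
        = label_expect n k f p + t * A + s * B + t * s * (\<Psi> j1 j2 - \<Psi> 0 j2 - \<Psi> j1 0 + \<Psi> 0 0)"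
      unfolding A_def B_def \<Psi>_def
      by (rule label_expect_shift_two_rows[OF i])
         (use j i(3) in \<open>auto simp: label_prob_add_two_ebasis p_def\<close>)
    then show ?thesis unfolding F_def multilinear_ext_eq_label_expect C_def p_def
      by (simp add: algebra_simps)
  qed
  have "F (\<lambda>a b. x a b + 1 * ebasis i1 j1 a b) = F x + A"
    using bilinear[of 1 0] by simp
  then have "A = partial F i1 j1 x"
    unfolding F_def partial_multilinear_ext[OF i(1) j(1)] multilinear_ext_add_ebasis[OF i(1) j(1)] by simp
  moreover have "F (\<lambda>a b. x a b + 1 * ebasis i2 j2 a b) = F x + B"
    using bilinear[of 0 1] by simp
  then have "B = partial F i2 j2 x"
    unfolding F_def partial_multilinear_ext[OF i(2) j(2)] multilinear_ext_add_ebasis[OF i(2) j(2)] by simp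
  moreover have "C \<ge> 0"
    unfolding C_def \<Psi>_def p_def by (rule cond_expect2_cross_nonneg[OF assms(1,2) i(3,1,2) j])
  ultimately show ?thesis using bilinear by blast
qed

lemma multilinear_ext_exchange_line:
  assumes "k_submodular n k f" "polytopeP n k x"
    and i: "i1 \<in> {1..n}" "i2 \<in> {1..n}" and j: "j1 \<in> {1..k}" "j2 \<in> {1..k}"
    and "(i1, j1) \<noteq> (i2, j2)"
  defines "F \<equiv> multilinear_ext n k f"
  shows "\<exists>C\<ge>0. \<forall>t. F (\<lambda>a b. x a b + t * (ebasis i1 j1 a b - ebasis i2 j2 a b))
           = F x + t * (partial F i1 j1 x - partial F i2 j2 x) + t\<^sup>2 * C"
proof -
  have exchange: "(\<lambda>a b. x a b + t * (ebasis i1 j1 a b - ebasis i2 j2 a b))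
      = (\<lambda>a b. x a b + t * ebasis i1 j1 a b + (- t) * ebasis i2 j2 a b)" for t
    by (simp add: algebra_simps)
  show ?thesis
  proof (cases "i1 = i2")
    case True
    with assms(7) have "j1 \<noteq> j2" by simp
    have "F (\<lambda>a b. x a b + t * (ebasis i1 j1 a b - ebasis i2 j2 a b))
        = F x + t * (partial F i1 j1 x - partial F i2 j2 x)" for t
    proof -
      have "label_prob k (\<lambda>a b. x a b + t * (ebasis i1 j1 a b - ebasis i2 j2 a b)) i l
          = label_prob k x i l + (if i = i1 then t * unit_diff j1 j2 l else 0)" for i l
        unfolding exchange label_prob_add_two_ebasis[OF j] using True
        by (simp add: unit_diff_def algebra_simps)
      then show ?thesis
        unfolding F_def multilinear_ext_eq_label_expect True
          partial_multilinear_ext[OF i(2) j(1)] partial_multilinear_ext[OF i(2) j(2)]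
        by (subst label_expect_shift_one_row[OF i(2), of j1 k j2]) (use j True in auto)
    qed
    then show ?thesis by (intro exI[of _ 0]) simp
  next
    case False
    then obtain C where "C \<ge> 0" and C: "\<And>t s. F (\<lambda>a b. x a b + t * ebasis i1 j1 a b + s * ebasis i2 j2 a b)
        = F x + t * partial F i1 j1 x + s * partial F i2 j2 x - t * s * C"
      using multilinear_ext_add_two_ebasis[OF assms(1,2) i _ j] unfolding F_def by blast
    have "F (\<lambda>a b. x a b + t * (ebasis i1 j1 a b - ebasis i2 j2 a b))
        = F x + t * (partial F i1 j1 x - partial F i2 j2 x) + t\<^sup>2 * C" for t
      unfolding exchange C by (simp add: power2_eq_square algebra_simps)
    with \<open>C \<ge> 0\<close> show ?thesis by blast
  qed
qed

section \<open>Exponential moments of a convex quadratic\<close>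

lemma exp_le_one_plus_self_plus_square:
  fixes y :: real
  assumes "\<bar>y\<bar> \<le> 1"
  shows "exp y \<le> 1 + y + y\<^sup>2"
proof (cases "y \<ge> 0")
  case True
  then show ?thesis using exp_bound assms by auto
next
  case False
  define u where "u = - y"
  have u: "0 < u" "u \<le> 1" using False assms u_def by auto
  have "1 - u + u\<^sup>2 > 0"
    using u by (simp add: power2_eq_square) (smt (verit) mult_pos_pos)
  then have "(1 - u + u\<^sup>2) * (1 + u) \<le> (1 - u + u\<^sup>2) * exp u"
    by (intro mult_left_mono exp_ge_add_one_self) auto
  moreover have "(1 - u + u\<^sup>2) * (1 + u) = 1 + u ^ 3"
    by (simp add: algebra_simps power2_eq_square power3_eq_cube)
  moreover have "0 \<le> u ^ 3" using u by simp
  ultimately have "1 \<le> (1 - u + u\<^sup>2) * exp u" by linarith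
  then have "exp (- u) \<le> 1 - u + u\<^sup>2" by (simp add: exp_minus field_simps)
  then show ?thesis using u_def by simp
qed

lemma two_point_exp_moment_convex_quadratic:
  fixes g :: "real \<Rightarrow> real"
  assumes g: "\<And>t. g t = c + t * D + t\<^sup>2 * C"
    and "C \<ge> 0" "\<bar>D\<bar> \<le> 1"
    and "\<beta> \<ge> 0" "\<gamma> \<ge> 0" "0 < \<beta> + \<gamma>" "\<beta> + \<gamma> \<le> 1"
    and "0 \<le> lam" "lam \<le> 1"
  shows "\<gamma> / (\<beta> + \<gamma>) * exp (lam * (c - g \<beta>)) + \<beta> / (\<beta> + \<gamma>) * exp (lam * (c - g (- \<gamma>)))
       \<le> exp (lam\<^sup>2 * \<beta> * \<gamma> * D\<^sup>2)"
proof -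
  define y1 where "y1 = - lam * \<beta> * D"
  define y2 where "y2 = lam * \<gamma> * D"
  have "\<bar>y1\<bar> \<le> 1" "\<bar>y2\<bar> \<le> 1"
    unfolding y1_def y2_def using assms(3-9)
    by (auto simp: abs_mult intro!: mult_le_one)
  moreover have "lam * (c - g \<beta>) \<le> y1" "lam * (c - g (- \<gamma>)) \<le> y2"
    unfolding g y1_def y2_def using assms(2,8) by (simp_all add: algebra_simps)
  ultimately have "exp (lam * (c - g \<beta>)) \<le> 1 + y1 + y1\<^sup>2" "exp (lam * (c - g (- \<gamma>))) \<le> 1 + y2 + y2\<^sup>2"
    by (meson exp_le_cancel_iff exp_le_one_plus_self_plus_square order_trans)+
  then have "\<gamma> / (\<beta> + \<gamma>) * exp (lam * (c - g \<beta>)) + \<beta> / (\<beta> + \<gamma>) * exp (lam * (c - g (- \<gamma>)))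
      \<le> \<gamma> / (\<beta> + \<gamma>) * (1 + y1 + y1\<^sup>2) + \<beta> / (\<beta> + \<gamma>) * (1 + y2 + y2\<^sup>2)"
    using assms(4,5) by (intro add_mono mult_left_mono) auto
  also have "\<dots> = (\<gamma> * (1 + y1 + y1\<^sup>2) + \<beta> * (1 + y2 + y2\<^sup>2)) / (\<beta> + \<gamma>)"
    by (simp add: add_divide_distrib)
  also have "\<gamma> * (1 + y1 + y1\<^sup>2) + \<beta> * (1 + y2 + y2\<^sup>2) = (\<beta> + \<gamma>) * (1 + lam\<^sup>2 * \<beta> * \<gamma> * D\<^sup>2)"
    unfolding y1_def y2_def by (simp add: power2_eq_square algebra_simps)
  also have "(\<beta> + \<gamma>) * (1 + lam\<^sup>2 * \<beta> * \<gamma> * D\<^sup>2) / (\<beta> + \<gamma>) = 1 + lam\<^sup>2 * \<beta> * \<gamma> * D\<^sup>2"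
    using assms(6) by simp
  also have "\<dots> \<le> exp (lam\<^sup>2 * \<beta> * \<gamma> * D\<^sup>2)" by (rule exp_ge_add_one_self)
  finally show ?thesis .
qed

theorem mainTheorem10:
  fixes n k :: nat and f :: "(nat \<Rightarrow> nat set) \<Rightarrow> real"
    and x :: "nat \<Rightarrow> nat \<Rightarrow> real" and i1 j1 i2 j2 :: nat and \<beta> \<gamma> lam :: real
  assumes "k \<ge> 1"
    and "k_submodular n k f" and "k_monotone n k f"
    and "\<And>S e j. S \<in> ktuples n k \<Longrightarrow> e \<in> {1..n} \<Longrightarrow> e \<notin> support k S \<Longrightarrow> j \<in> {1..k} \<Longrightarrow>
           0 \<le> marginal f e j S \<and> marginal f e j S \<le> 1"
    and "polytopeP n k x"
    and "i1 \<in> {1..n}" "j1 \<in> {1..k}" "i2 \<in> {1..n}" "j2 \<in> {1..k}" "(i1, j1) \<noteq> (i2, j2)"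
    and "\<beta> \<ge> 0" "\<gamma> \<ge> 0" "0 < \<beta> + \<gamma>" "\<beta> + \<gamma> \<le> 1"
    and "polytopeP n k (\<lambda>a b. x a b + \<beta> * (ebasis i1 j1 a b - ebasis i2 j2 a b))"
    and "polytopeP n k (\<lambda>a b. x a b - \<gamma> * (ebasis i1 j1 a b - ebasis i2 j2 a b))"
    and "0 \<le> lam" "lam \<le> 1"
  shows "\<gamma> / (\<beta> + \<gamma>) * exp (lam * (multilinear_ext n k f x
              - multilinear_ext n k f (\<lambda>a b. x a b + \<beta> * (ebasis i1 j1 a b - ebasis i2 j2 a b))))
       + \<beta> / (\<beta> + \<gamma>) * exp (lam * (multilinear_ext n k f x
              - multilinear_ext n k f (\<lambda>a b. x a b - \<gamma> * (ebasis i1 j1 a b - ebasis i2 j2 a b))))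
       \<le> exp (lam\<^sup>2 * \<beta> * \<gamma> * (partial (multilinear_ext n k f) i2 j2 x
                                  - partial (multilinear_ext n k f) i1 j1 x)\<^sup>2)"
proof -
  define F where "F = multilinear_ext n k f"
  define D where "D = partial F i1 j1 x - partial F i2 j2 x"
  obtain C where "C \<ge> 0"
    and line: "\<And>t. F (\<lambda>a b. x a b + t * (ebasis i1 j1 a b - ebasis i2 j2 a b)) = F x + t * D + t\<^sup>2 * C"
    using multilinear_ext_exchange_line[OF assms(2,5,6,8,7,9,10)] unfolding F_def D_def by blast
  have "0 \<le> partial F i j x \<and> partial F i j x \<le> 1" if "i \<in> {1..n}" "j \<in> {1..k}" for i j
    unfolding F_def by (rule partial_multilinear_ext_bounds[OF _ assms(5) that]) (fact assms(4))
  from this[OF assms(6,7)] this[OF assms(8,9)] have "\<bar>D\<bar> \<le> 1" unfolding D_def by linarith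
  have "(\<lambda>a b. x a b - \<gamma> * (ebasis i1 j1 a b - ebasis i2 j2 a b))
      = (\<lambda>a b. x a b + (- \<gamma>) * (ebasis i1 j1 a b - ebasis i2 j2 a b))" by simp
  then show ?thesis
    unfolding F_def[symmetric] power2_commute[of "partial F i2 j2 x"] D_def[symmetric]
    using two_point_exp_moment_convex_quadratic[OF line \<open>C \<ge> 0\<close> \<open>\<bar>D\<bar> \<le> 1\<close> assms(11-14,17,18)]
    by simp
qed

end
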